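(* Let $p_1,p_2>2$ be distinct primes and $m_2=p_1^{\beta_1}p_2^{\beta_2}$ with $\beta_1,\beta_2$ positive integers. Let $t=\mathrm{ord}_{m_2}(2)$ and let $\gamma\in\mathbb{F}_{2^t}^*$ be a primitive $m_2$th root of unity. Suppose that $m_2$ is good and that $(u,v)=(p_1^{i_1}p_2^{i_2}\sigma_1,\ p_1^{j_1}p_2^{j_2}\sigma_2)$ is a collision for $m_2$, where $i_1,i_2,j_1,j_2$ are nonnegative integers and $\sigma_1,\sigma_2$ are integers coprime to $m_2$. Let $\omega_1=\min\{i_1,j_1\}$ and $\omega_2=\min\{i_2,j_2\}$. Then $m_1:=m_2/(p_1^{\omega_1}p_2^{\omega_2})$ is good.
   Context: For $m=p_1^{\alpha_1}p_2^{\alpha_2}$ with $p_1,p_2>2$ distinct primes and $\alpha_1,\alpha_2\ge1$: $\mathrm{ord}_m(2)$ is the multiplicative order of $2$ modulo $m$, and with $t=\mathrm{ord}_m(2)$ one fixes a primitive $m$th root of unity $\gamma\in\mathbb{F}_{2^t}^*$. The canonical set of $m$ is $S_m=\{s_{01},s_{10},s_{11}\}\subseteq\mathbb{Z}_m$, where for $\sigma=(\sigma_1,\sigma_2)\in\{0,1\}^2\setminus\{(0,0)\}$, $s_\sigma$ is the unique element of $\mathbb{Z}_m$ with $s_\sigma\equiv\sigma_1 \pmod{p_1^{\alpha_1}}$ and $s_\sigma\equiv \sigma_2\pmod{p_2^{\alpha_2}}$. An $S_m$-decoding polynomial is a polynomial $P(X)\in\mathbb{F}_{2^t}[X]$ such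 that $P(\gamma^s)=0$ for every $s\in S_m$ and $P(1)=1$. The number $m$ is called good if there exists an $S_m$-decoding polynomial with fewer than $4$ monomials (nonzero terms). Let $E=\{e\in\mathbb{Z}: p_1^{\alpha_1}\nmid e,\ p_2^{\alpha_2}\nmid e\}$ and $\rho(z_1,z_2)=(1+z_2^{-1})(1+z_1^{-1})^{-1}$. A pair $(u,v)\in E^2$ is a collision for $m$ if $\rho(\gamma^{s_{10}u},\gamma^{s_{01}u})=\rho(\gamma^{s_{10}v},\gamma^{s_{01}v})$ and $u\not\equiv v\pmod m$. *)

theory Defs
  imports "HOL-Number_Theory.Number_Theory" "HOL-Computational_Algebra.Polynomial" "HOL-Library.Cardinality"
begin

(* m = p1^a1 * p2^a2 throughout; q1 = p1^a1, q2 = p2^a2. *)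

definition primitive_root_of_unity :: "'a::field \<Rightarrow> nat \<Rightarrow> bool" where
  "primitive_root_of_unity g m \<longleftrightarrow> 0 < m \<and> g ^ m = 1 \<and> (\<forall>k. 0 < k \<and> k < m \<longrightarrow> g ^ k \<noteq> 1)"

definition canon_elem :: "nat \<Rightarrow> nat \<Rightarrow> nat \<Rightarrow> nat \<Rightarrow> nat \<Rightarrow> nat \<Rightarrow> nat" where
  "canon_elem p1 a1 p2 a2 e1 e2 =
     (THE s. s < p1 ^ a1 * p2 ^ a2 \<and> [s = e1] (mod p1 ^ a1) \<and> [s = e2] (mod p2 ^ a2))"

definition canonical_set :: "nat \<Rightarrow> nat \<Rightarrow> nat \<Rightarrow> nat \<Rightarrow> nat set" where
  "canonical_set p1 a1 p2 a2 =
     {canon_elem p1 a1 p2 a2 0 1, canon_elem p1 a1 p2 a2 1 0, canon_elem p1 a1 p2 a2 1 1}"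

definition decoding_poly :: "'a::field \<Rightarrow> nat set \<Rightarrow> 'a poly \<Rightarrow> bool" where
  "decoding_poly g S P \<longleftrightarrow> (\<forall>s\<in>S. poly P (g ^ s) = 0) \<and> poly P 1 = 1"

definition num_monomials :: "'a::zero poly \<Rightarrow> nat" where
  "num_monomials P = card {i. coeff P i \<noteq> 0}"

(* m = p1^a1 p2^a2 is good, w.r.t. the field 'a (meant to be F_{2^t}) and the primitive root g *)
definition good :: "'a::field \<Rightarrow> nat \<Rightarrow> nat \<Rightarrow> nat \<Rightarrow> nat \<Rightarrow> bool" where
  "good g p1 a1 p2 a2 \<longleftrightarrow>
     (\<exists>P. decoding_poly g (canonical_set p1 a1 p2 a2) P \<and> num_monomials P < 4)"

definition E_set :: "nat \<Rightarrow> nat \<Rightarrow> nat \<Rightarrow> nat \<Rightarrow> int set" where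
  "E_set p1 a1 p2 a2 = {e. \<not> int (p1 ^ a1) dvd e \<and> \<not> int (p2 ^ a2) dvd e}"

definition rho :: "'a::field \<Rightarrow> 'a \<Rightarrow> 'a" where
  "rho z1 z2 = (1 + inverse z2) * inverse (1 + inverse z1)"

definition collision :: "'a::field \<Rightarrow> nat \<Rightarrow> nat \<Rightarrow> nat \<Rightarrow> nat \<Rightarrow> int \<Rightarrow> int \<Rightarrow> bool" where
  "collision g p1 a1 p2 a2 u v \<longleftrightarrow>
     u \<in> E_set p1 a1 p2 a2 \<and> v \<in> E_set p1 a1 p2 a2 \<and>
     (let s10 = int (canon_elem p1 a1 p2 a2 1 0); s01 = int (canon_elem p1 a1 p2 a2 0 1) in
       rho (g powi (s10 * u)) (g powi (s01 * u)) = rho (g powi (s10 * v)) (g powi (s01 * v)))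
     \<and> \<not> [u = v] (mod int (p1 ^ a1 * p2 ^ a2))"

end

theory Submission
  imports Defs "HOL-Library.Z2"
begin

text \<open>Write \<open>d = p1^\<omega>1 p2^\<omega>2\<close>. Both entries of the collision are multiples of \<open>d\<close>, so
  replacing \<open>\<gamma>\<close> by \<open>\<gamma>^d\<close>, a primitive \<open>m1\<close>-th root of unity, turns it into a collision for
  \<open>m1\<close>. The collision equation says that \<open>\<gamma>^d\<close> is a root of a polynomial over \<open>\<bbbF>\<^sub>2\<close>; since
  \<open>\<gamma>^d\<close> and some \<open>\<delta>^j\<close> with \<open>j\<close> coprime to \<open>m1\<close> are roots of the same irreducible factor
  of \<open>X^m1 - 1\<close>, the collision moves to \<open>\<delta>\<close>. Finally, a collision \<open>(a, b)\<close> yields the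
  decoding polynomial \<open>k0 + k1 X^a + k2 X^b\<close>: its three vanishing conditions form a linear
  system that is singular precisely because of the collision equation.\<close>

section \<open>Characteristic two\<close>

lemma CHAR_eq_2_of_card:
  assumes "CARD('a::{field,finite}) = 2 ^ n"
  shows "CHAR('a) = 2"
proof -
  have "prime CHAR('a)"
    by (intro prime_CHAR_semidom finite_imp_CHAR_pos) simp
  moreover have "CHAR('a) dvd 2 ^ n"
    using CHAR_dvd_CARD[where 'a='a] assms by simp
  ultimately show ?thesis
    by (metis prime_dvd_power two_is_prime_nat primes_dvd_imp_eq)
qed

lemma CHAR_2_add_eq_0_iff:
  assumes "CHAR('a::ring_1) = 2"
  shows "x + y = (0::'a) \<longleftrightarrow> x = y"
  using minus_CHAR_2[OF assms, of x y] by (metis right_minus_eq)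

section \<open>Roots of unity\<close>

lemma primitive_root_of_unity_iff_dvd:
  "primitive_root_of_unity z m \<longleftrightarrow> 0 < m \<and> (\<forall>n. z ^ n = 1 \<longleftrightarrow> m dvd n)"
proof
  assume prim: "primitive_root_of_unity z m"
  then have "0 < m" "z ^ m = 1"
    unfolding primitive_root_of_unity_def by blast+
  have "z ^ n = 1 \<longleftrightarrow> m dvd n" for n
  proof -
    have "z ^ n = z ^ (m * (n div m) + n mod m)"
      by simp
    also have "\<dots> = (z ^ m) ^ (n div m) * z ^ (n mod m)"
      by (simp only: power_add power_mult)
    finally have "z ^ n = z ^ (n mod m)"
      using \<open>z ^ m = 1\<close> by simp
    moreover have "z ^ (n mod m) \<noteq> 1" if "n mod m \<noteq> 0"
    proof -
      have "0 < n mod m" "n mod m < m"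
        using that \<open>0 < m\<close> by simp_all
      then show ?thesis
        using prim unfolding primitive_root_of_unity_def by blast
    qed
    ultimately show ?thesis
      by (auto simp: dvd_eq_mod_eq_0)
  qed
  with \<open>0 < m\<close> show "0 < m \<and> (\<forall>n. z ^ n = 1 \<longleftrightarrow> m dvd n)"
    by blast
next
  assume dvd: "0 < m \<and> (\<forall>n. z ^ n = 1 \<longleftrightarrow> m dvd n)"
  then have "z ^ m = 1"
    by simp
  moreover have "z ^ k \<noteq> 1" if "0 < k" "k < m" for k
    using dvd nat_dvd_not_less[OF that] by blast
  ultimately show "primitive_root_of_unity z m"
    using dvd unfolding primitive_root_of_unity_def by blast
qed

lemma primitive_root_of_unity_pos:
  "primitive_root_of_unity z m \<Longrightarrow> 0 < m"
  by (simp add: primitive_root_of_unity_iff_dvd)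

lemma primitive_root_of_unity_pow_eq_1_iff:
  "primitive_root_of_unity z m \<Longrightarrow> z ^ n = 1 \<longleftrightarrow> m dvd n"
  by (simp add: primitive_root_of_unity_iff_dvd)

lemma primitive_root_of_unity_nonzero:
  "primitive_root_of_unity z m \<Longrightarrow> z \<noteq> 0"
  unfolding primitive_root_of_unity_def by (metis power_0_left zero_neq_one less_irrefl)

lemma primitive_root_of_unity_pow_eq_iff:
  assumes "primitive_root_of_unity z m"
  shows "z ^ i = z ^ j \<longleftrightarrow> [i = j] (mod m)"
proof -
  have *: "z ^ i = z ^ j \<longleftrightarrow> [j = i] (mod m)" if "i \<le> j" for i j
  proof -
    have "z ^ j = z ^ i * z ^ (j - i)"
      using that by (simp flip: power_add)
    then have "z ^ i = z ^ j \<longleftrightarrow> z ^ (j - i) = 1"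
      using primitive_root_of_unity_nonzero[OF assms] by auto
    also have "\<dots> \<longleftrightarrow> [j = i] (mod m)"
      using that by (simp add: primitive_root_of_unity_pow_eq_1_iff[OF assms] cong_altdef_nat)
    finally show ?thesis .
  qed
  show ?thesis
    using *[of i j] *[of j i] by (metis cong_sym_eq nat_le_linear)
qed

lemma primitive_root_of_unity_power:
  assumes "primitive_root_of_unity z (d * m)"
  shows "primitive_root_of_unity (z ^ d) m"
proof -
  have "0 < d" "0 < m"
    using primitive_root_of_unity_pos[OF assms] by simp_all
  have "(z ^ d) ^ n = 1 \<longleftrightarrow> m dvd n" for n
  proof -
    have "(z ^ d) ^ n = 1 \<longleftrightarrow> d * m dvd d * n"
      unfolding power_mult[symmetric] by (rule primitive_root_of_unity_pow_eq_1_iff[OF assms])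
    then show ?thesis
      using \<open>0 < d\<close> by simp
  qed
  then show ?thesis
    using \<open>0 < m\<close> unfolding primitive_root_of_unity_iff_dvd by blast
qed

lemma coprime_of_primitive_root_of_unity_power:
  assumes "primitive_root_of_unity z m" "primitive_root_of_unity (z ^ j) m"
  shows "coprime j m"
proof -
  define g where "g = gcd j m"
  have "g dvd m" "g dvd j"
    unfolding g_def by simp_all
  obtain k where m: "m = g * k"
    using \<open>g dvd m\<close> ..
  obtain j' where j: "j = g * j'"
    using \<open>g dvd j\<close> ..
  have "0 < m"
    using primitive_root_of_unity_pos[OF assms(1)] .
  then have "0 < k" "0 < g"
    using m by simp_all
  have "j * k = j' * m"
    using m j by (simp add: mult_ac)
  then have "(z ^ j) ^ k = z ^ (j' * m)"
    by (simp flip: power_mult)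
  then have "(z ^ j) ^ k = 1"
    using primitive_root_of_unity_pow_eq_1_iff[OF assms(1)] by simp
  then have "m dvd k"
    using primitive_root_of_unity_pow_eq_1_iff[OF assms(2)] by simp
  then have "g * k \<le> 1 * k"
    using \<open>0 < k\<close> m by (simp add: dvd_imp_le)
  then have "g = 1"
    using \<open>0 < k\<close> \<open>0 < g\<close> by simp
  then show ?thesis
    unfolding g_def by (rule gcd_eq_1_imp_coprime)
qed

lemma power_int_eq_power_of_cong:
  fixes z :: "'a::field"
  assumes "z ^ m = 1" "[k = int n] (mod int m)"
  shows "z powi k = z ^ n"
proof (cases "m = 0")
  case True
  then show ?thesis
    using assms(2) by simp
next
  case False
  then have "z \<noteq> 0"
    using assms(1) by (metis power_0_left zero_neq_one)
  obtain t where k: "k = int n + int m * t"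
    using assms(2) by (metis cong_iff_lin cong_sym)
  have "z powi k = z powi int n * (z powi int m) powi t"
    unfolding k using \<open>z \<noteq> 0\<close> by (simp add: power_int_add power_int_mult)
  then show ?thesis
    using assms(1) by simp
qed

section \<open>Conjugate roots over \<open>\<bbbF>\<^sub>2\<close>\<close>

definition of_bit :: "bit \<Rightarrow> 'a::ring_1" where
  "of_bit b = (if b = 0 then 0 else 1)"

abbreviation of_bit_poly :: "bit poly \<Rightarrow> 'a::ring_1 poly" where
  "of_bit_poly \<equiv> map_poly of_bit"

lemma of_bit_0 [simp]: "of_bit 0 = 0"
  and of_bit_1 [simp]: "of_bit 1 = 1"
  and of_bit_eq_0_iff [simp]: "of_bit b = 0 \<longleftrightarrow> b = 0"
  by (simp_all add: of_bit_def)

lemma of_bit_mult: "of_bit (x * y) = of_bit x * of_bit y"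
  by (cases "x = 0") simp_all

lemma of_bit_add:
  assumes "CHAR('a::ring_1) = 2"
  shows "(of_bit (x + y) :: 'a) = of_bit x + of_bit y"
proof -
  have "(1::'a) + 1 = 0"
    using CHAR_2_add_eq_0_iff[OF assms] by blast
  moreover have "(1::bit) + 1 = 0"
    by simp
  ultimately show ?thesis
    by (cases "x = 0"; cases "y = 0") simp_all
qed

lemma of_bit_poly_add:
  assumes "CHAR('a::ring_1) = 2"
  shows "(of_bit_poly (p + q) :: 'a poly) = of_bit_poly p + of_bit_poly q"
  by (rule poly_eqI) (simp only: coeff_map_poly of_bit_0 coeff_add of_bit_add[OF assms])

lemma of_bit_poly_mult:
  assumes "CHAR('a::comm_ring_1) = 2"
  shows "(of_bit_poly (p * q) :: 'a poly) = of_bit_poly p * of_bit_poly q"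
proof (induction p)
  case 0
  then show ?case
    by simp
next
  case (pCons a p)
  have "(of_bit_poly (pCons a p * q) :: 'a poly)
          = of_bit_poly (smult a q) + of_bit_poly (pCons 0 (p * q))"
    by (simp add: of_bit_poly_add[OF assms])
  also have "\<dots> = smult (of_bit a) (of_bit_poly q) + pCons 0 (of_bit_poly p * of_bit_poly q)"
    by (simp add: map_poly_smult of_bit_mult map_poly_pCons pCons.IH)
  also have "\<dots> = of_bit_poly (pCons a p) * of_bit_poly q"
    by (simp add: map_poly_pCons)
  finally show ?case .
qed

lemma degree_of_bit_poly [simp]: "degree (of_bit_poly p :: 'a::{ring_1,zero_neq_one} poly) = degree p"
  by (rule degree_map_poly) simp

lemma of_bit_poly_monom_add_1:
  assumes "CHAR('a::comm_ring_1) = 2"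
  shows "(of_bit_poly (monom 1 n + 1) :: 'a poly) = monom 1 n + 1"
  by (simp add: of_bit_poly_add[OF assms] map_poly_monom)

lemma degree_monom_add_1:
  "0 < n \<Longrightarrow> degree (monom 1 n + 1 :: 'a::{comm_ring_1,zero_neq_one} poly) = n"
  by (subst degree_add_eq_left) (simp_all add: degree_monom_eq)

lemma poly_of_bit_poly_monom_add_1_eq_0_iff:
  assumes "CHAR('a::field) = 2"
  shows "poly (of_bit_poly (monom 1 n + 1)) (x::'a) = 0 \<longleftrightarrow> x ^ n = 1"
  by (simp add: of_bit_poly_monom_add_1[OF assms] poly_monom CHAR_2_add_eq_0_iff[OF assms])

lemma bit_poly_minimal_polynomial:
  fixes x :: "'a::field"
  assumes char: "CHAR('a) = 2" and "g0 \<noteq> 0" "poly (of_bit_poly g0) x = 0"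
  obtains f where "irreducible f" "\<And>g. poly (of_bit_poly g) x = 0 \<longleftrightarrow> f dvd g"
proof -
  let ?root = "\<lambda>g. poly (of_bit_poly g) x = 0"
  have root_mult: "?root (g * h) \<longleftrightarrow> ?root g \<or> ?root h" for g h
    by (simp add: of_bit_poly_mult[OF char])
  obtain f where f: "f \<noteq> 0" "?root f"
    and least: "\<And>g. g \<noteq> 0 \<Longrightarrow> ?root g \<Longrightarrow> degree f \<le> degree g"
    using ex_has_least_nat[of "\<lambda>g. g \<noteq> 0 \<and> ?root g" g0 degree] assms by blast
  have root_iff: "?root g \<longleftrightarrow> f dvd g" for g
  proof
    assume "?root g"
    have "g = g div f * f + g mod f"
      by simp
    then have "?root (g mod f)"
      using \<open>?root g\<close> f(2) by (metis add_0 of_bit_poly_add[OF char] poly_add root_mult)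
    then have "g mod f = 0"
      using least degree_mod_less'[OF f(1)] by (meson leD)
    then show "f dvd g"
      by (simp add: mod_eq_0_iff_dvd)
  next
    assume "f dvd g"
    then show "?root g"
      using f(2) root_mult by auto
  qed
  have "prime_elem f"
  proof (rule prime_elemI)
    show "f \<noteq> 0"
      by fact
    show "\<not> is_unit f"
      using root_iff[of 1] by auto
    show "f dvd a \<or> f dvd b" if "f dvd a * b" for a b
    proof -
      have "?root a \<or> ?root b"
        using root_iff[THEN iffD2, OF that] by (simp only: root_mult)
      then show ?thesis
        by (simp only: root_iff)
    qed
  qed
  then have "irreducible f"
    by (rule prime_elem_imp_irreducible)
  then show thesis
    by (rule that) (rule root_iff)
qed

lemma bit_poly_root_of_irreducible:
  fixes x :: "'a::field"
  assumes char: "CHAR('a) = 2" and "irreducible f" "poly (of_bit_poly f) x = 0"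
  shows "poly (of_bit_poly g) x = 0 \<longleftrightarrow> f dvd g"
proof -
  have "f \<noteq> 0"
    using assms(2) by auto
  obtain h where h: "irreducible h" "\<And>g. poly (of_bit_poly g) x = 0 \<longleftrightarrow> h dvd g"
    using bit_poly_minimal_polynomial[OF char \<open>f \<noteq> 0\<close> assms(3)] by metis
  have "h dvd f"
    using h(2)[of f] assms(3) by simp
  then have "f dvd h"
    using assms(2) h(1) irreducibleD' irreducible_not_unit by blast
  with \<open>h dvd f\<close> have "h dvd g \<longleftrightarrow> f dvd g"
    by (meson dvd_trans)
  with h(2) show ?thesis
    by simp
qed

lemma dvd_poly_with_all_roots_has_root:
  fixes f p :: "'a::field poly"
  assumes "f dvd p" "p \<noteq> 0" "0 < degree f"
    and "R \<subseteq> {x. poly p x = 0}" "card R = degree p"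
  shows "\<exists>x\<in>R. poly f x = 0"
proof (rule ccontr)
  assume no_root: "\<not> (\<exists>x\<in>R. poly f x = 0)"
  obtain q where q: "p = f * q"
    using assms(1) by blast
  have "q \<noteq> 0" "f \<noteq> 0"
    using assms(2) q by auto
  then have deg: "degree p = degree f + degree q"
    using q by (simp add: degree_mult_eq)
  have "R \<subseteq> {x. poly q x = 0}"
    using assms(4) q no_root by auto
  then have "card R \<le> degree q"
    using card_mono[OF poly_roots_finite[OF \<open>q \<noteq> 0\<close>]] card_poly_roots_bound[OF \<open>q \<noteq> 0\<close>]
    by (meson le_trans)
  with assms(3,5) deg show False
    by simp
qed

lemma dvd_poly_vanishing_on_roots_of_unity_has_root:
  fixes f p :: "'a::field poly"
  assumes prim: "primitive_root_of_unity \<delta> m"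
    and "f dvd p" "0 < degree f" "degree p = m" "\<And>x. x ^ m = 1 \<Longrightarrow> poly p x = 0"
  shows "\<exists>j. poly f (\<delta> ^ j) = 0"
proof -
  define R where "R = (\<lambda>j. \<delta> ^ j) ` {..<m}"
  have "0 < m"
    using primitive_root_of_unity_pos[OF prim] .
  then have "p \<noteq> 0"
    using assms(4) by auto
  have "inj_on (\<lambda>j. \<delta> ^ j) {..<m}"
    by (intro inj_onI) (simp add: primitive_root_of_unity_pow_eq_iff[OF prim] cong_def)
  then have "card R = degree p"
    unfolding R_def assms(4) by (simp add: card_image)
  moreover have "R \<subseteq> {x. poly p x = 0}"
    unfolding R_def using assms(5) primitive_root_of_unity_pow_eq_1_iff[OF prim]
    by (auto simp flip: power_mult simp: mult.commute)
  ultimately have "\<exists>x\<in>R. poly f x = 0"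
    using dvd_poly_with_all_roots_has_root assms(2,3) \<open>p \<noteq> 0\<close> by blast
  then show ?thesis
    unfolding R_def by blast
qed

lemma primitive_root_of_unity_conjugate:
  fixes \<eta> :: "'a::field" and \<delta> :: "'b::field"
  assumes char: "CHAR('a) = 2" "CHAR('b) = 2"
    and prim: "primitive_root_of_unity \<eta> m" "primitive_root_of_unity \<delta> m"
    and root: "poly (of_bit_poly G) \<eta> = 0"
  obtains j where "coprime j m" "poly (of_bit_poly G) (\<delta> ^ j) = 0"
proof -
  note roots_of_unity_a = poly_of_bit_poly_monom_add_1_eq_0_iff[OF char(1)]
  note roots_of_unity_b = poly_of_bit_poly_monom_add_1_eq_0_iff[OF char(2)]
  have "0 < m"
    using primitive_root_of_unity_pos[OF prim(1)] .
  have "monom 1 m + 1 \<noteq> (0 :: bit poly)"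
    using degree_monom_add_1[OF \<open>0 < m\<close>] \<open>0 < m\<close> by (metis degree_0 less_irrefl)
  moreover have "poly (of_bit_poly (monom 1 m + 1)) \<eta> = 0"
    by (simp add: roots_of_unity_a primitive_root_of_unity_pow_eq_1_iff[OF prim(1)])
  ultimately obtain f where f: "irreducible f" "\<And>g. poly (of_bit_poly g) \<eta> = 0 \<longleftrightarrow> f dvd g"
    using bit_poly_minimal_polynomial[OF char(1)] by metis
  have "(of_bit_poly f :: 'b poly) dvd of_bit_poly (monom 1 m + 1)"
    using f(2) \<open>poly (of_bit_poly (monom 1 m + 1)) \<eta> = 0\<close> of_bit_poly_mult[OF char(2)]
    by (metis dvdE dvdI)
  moreover have "0 < degree (of_bit_poly f :: 'b poly)"
    using f(1) by (metis degree_of_bit_poly irreducible_not_unit is_unit_iff_degree not_gr0 irreducible_def)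
  moreover have "degree (of_bit_poly (monom 1 m + 1) :: 'b poly) = m"
    using degree_monom_add_1[OF \<open>0 < m\<close>] by simp
  ultimately obtain j where "poly (of_bit_poly f) (\<delta> ^ j) = 0"
    using dvd_poly_vanishing_on_roots_of_unity_has_root[OF prim(2)] roots_of_unity_b by blast
  then have same_roots: "poly (of_bit_poly g) \<eta> = 0 \<longleftrightarrow> poly (of_bit_poly g) (\<delta> ^ j) = 0" for g
    using f(2)[of g] bit_poly_root_of_irreducible[OF char(2) f(1), of "\<delta> ^ j" g] by simp
  have "(\<delta> ^ j) ^ n = 1 \<longleftrightarrow> m dvd n" for n
    using same_roots[of "monom 1 n + 1"] roots_of_unity_a roots_of_unity_b
      primitive_root_of_unity_pow_eq_1_iff[OF prim(1)] by simp
  with \<open>0 < m\<close> have "primitive_root_of_unity (\<delta> ^ j) m"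
    by (simp add: primitive_root_of_unity_iff_dvd)
  show thesis
  proof (rule that)
    show "coprime j m"
      by (rule coprime_of_primitive_root_of_unity_power) fact+
    show "poly (of_bit_poly G) (\<delta> ^ j) = 0"
      using root same_roots by simp
  qed
qed

section \<open>Canonical elements\<close>

lemma cong_mult_modulus_iff_nat:
  fixes a b m n :: nat
  assumes "coprime m n"
  shows "[a = b] (mod m * n) \<longleftrightarrow> [a = b] (mod m) \<and> [a = b] (mod n)"
  using coprime_cong_mult_nat[OF _ _ assms] cong_dvd_modulus_nat[of a b "m * n" m]
    cong_dvd_modulus_nat[of a b "m * n" n] by auto

lemma canon_elem_spec:
  assumes "coprime p1 p2" "p1 \<noteq> 0" "p2 \<noteq> 0"
  shows "canon_elem p1 a1 p2 a2 e1 e2 < p1 ^ a1 * p2 ^ a2"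
    and "[canon_elem p1 a1 p2 a2 e1 e2 = e1] (mod p1 ^ a1)"
    and "[canon_elem p1 a1 p2 a2 e1 e2 = e2] (mod p2 ^ a2)"
proof -
  have "\<exists>!s. s < p1 ^ a1 * p2 ^ a2 \<and> [s = e1] (mod p1 ^ a1) \<and> [s = e2] (mod p2 ^ a2)"
    using assms by (intro binary_chinese_remainder_unique_nat) simp_all
  from theI'[OF this] show "canon_elem p1 a1 p2 a2 e1 e2 < p1 ^ a1 * p2 ^ a2"
    and "[canon_elem p1 a1 p2 a2 e1 e2 = e1] (mod p1 ^ a1)"
    and "[canon_elem p1 a1 p2 a2 e1 e2 = e2] (mod p2 ^ a2)"
    unfolding canon_elem_def by blast+
qed

lemma canon_elem_swap: "canon_elem p1 a1 p2 a2 e1 e2 = canon_elem p2 a2 p1 a1 e2 e1"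
  unfolding canon_elem_def by (simp add: mult.commute conj_commute)

lemma canon_elem_1_1:
  assumes "coprime p1 p2" "p1 \<noteq> 0" "p2 \<noteq> 0" "1 < p1 ^ a1 * p2 ^ a2"
  shows "canon_elem p1 a1 p2 a2 1 1 = 1"
proof -
  note spec = canon_elem_spec[OF assms(1-3), of a1 a2 1 1]
  have "[canon_elem p1 a1 p2 a2 1 1 = 1] (mod p1 ^ a1 * p2 ^ a2)"
    using spec assms(1) by (simp add: cong_mult_modulus_iff_nat)
  then show ?thesis
    using spec(1) assms(4) unfolding cong_def by (metis mod_less)
qed

lemma canon_elem_1_0_add_0_1:
  assumes "coprime p1 p2" "p1 \<noteq> 0" "p2 \<noteq> 0"
  shows "[canon_elem p1 a1 p2 a2 1 0 + canon_elem p1 a1 p2 a2 0 1 = 1] (mod p1 ^ a1 * p2 ^ a2)"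
proof -
  note spec10 = canon_elem_spec[OF assms, of a1 a2 1 0]
  note spec01 = canon_elem_spec[OF assms, of a1 a2 0 1]
  have "[canon_elem p1 a1 p2 a2 1 0 + canon_elem p1 a1 p2 a2 0 1 = 1 + 0] (mod p1 ^ a1)"
    "[canon_elem p1 a1 p2 a2 1 0 + canon_elem p1 a1 p2 a2 0 1 = 0 + 1] (mod p2 ^ a2)"
    using cong_add[OF spec10(2) spec01(2)] cong_add[OF spec10(3) spec01(3)] by simp_all
  then show ?thesis
    using assms(1) by (simp add: cong_mult_modulus_iff_nat)
qed

lemma canon_elem_cong_lower:
  assumes "coprime p1 p2" "p1 \<noteq> 0" "p2 \<noteq> 0" "c1 \<le> b1" "c2 \<le> b2"
  shows "[canon_elem p1 b1 p2 b2 e1 e2 = canon_elem p1 c1 p2 c2 e1 e2] (mod p1 ^ c1 * p2 ^ c2)"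
proof -
  note upper = canon_elem_spec[OF assms(1-3), of b1 b2 e1 e2]
  note lower = canon_elem_spec[OF assms(1-3), of c1 c2 e1 e2]
  have "p1 ^ c1 dvd p1 ^ b1" "p2 ^ c2 dvd p2 ^ b2"
    using assms(4,5) by (simp_all add: le_imp_power_dvd)
  then have "[canon_elem p1 b1 p2 b2 e1 e2 = e1] (mod p1 ^ c1)"
    "[canon_elem p1 b1 p2 b2 e1 e2 = e2] (mod p2 ^ c2)"
    using upper cong_dvd_modulus_nat by blast+
  then show ?thesis
    using lower assms(1) by (simp add: cong_mult_modulus_iff_nat) (meson cong_sym cong_trans)
qed

lemma power_canon_elem_1_0_eq_iff:
  assumes "coprime p1 p2" "p1 \<noteq> 0" "p2 \<noteq> 0" "primitive_root_of_unity z (p1 ^ a1 * p2 ^ a2)"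
  shows "z ^ (canon_elem p1 a1 p2 a2 1 0 * a) = z ^ (canon_elem p1 a1 p2 a2 1 0 * b)
           \<longleftrightarrow> [a = b] (mod p1 ^ a1)"
proof -
  define s where "s = canon_elem p1 a1 p2 a2 1 0"
  have s: "[s = 1] (mod p1 ^ a1)" "[s = 0] (mod p2 ^ a2)"
    using canon_elem_spec[OF assms(1-3)] unfolding s_def by blast+
  have "[s * a = 1 * a] (mod p1 ^ a1)" "[s * b = 1 * b] (mod p1 ^ a1)"
    using cong_scalar_right[OF s(1)] by blast+
  moreover have "[s * a = s * b] (mod p2 ^ a2)"
    using s(2) by (metis cong_scalar_right cong_sym cong_trans mult_zero_left)
  moreover have "coprime (p1 ^ a1) (p2 ^ a2)"
    using assms(1) by simp
  ultimately have "[s * a = s * b] (mod p1 ^ a1 * p2 ^ a2) \<longleftrightarrow> [a = b] (mod p1 ^ a1)"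
    unfolding cong_mult_modulus_iff_nat[OF \<open>coprime (p1 ^ a1) (p2 ^ a2)\<close>]
    by (simp del: One_nat_def) (meson cong_sym cong_trans)
  then show ?thesis
    unfolding s_def[symmetric] primitive_root_of_unity_pow_eq_iff[OF assms(4)] .
qed

lemma power_canon_elem_0_1_eq_iff:
  assumes "coprime p1 p2" "p1 \<noteq> 0" "p2 \<noteq> 0" "primitive_root_of_unity z (p1 ^ a1 * p2 ^ a2)"
  shows "z ^ (canon_elem p1 a1 p2 a2 0 1 * a) = z ^ (canon_elem p1 a1 p2 a2 0 1 * b)
           \<longleftrightarrow> [a = b] (mod p2 ^ a2)"
  using power_canon_elem_1_0_eq_iff[of p2 p1 z a2 a1] assms
  by (simp add: canon_elem_swap coprime_commute mult.commute)

section \<open>Collisions\<close>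

definition cross_eq :: "'a::field \<Rightarrow> 'a \<Rightarrow> 'a \<Rightarrow> 'a \<Rightarrow> bool" where
  "cross_eq x1 y1 x2 y2 \<longleftrightarrow> x1 * (y1 + 1) * y2 * (x2 + 1) = x2 * (y2 + 1) * y1 * (x1 + 1)"

lemma rho_eq_iff_cross_eq:
  fixes x1 y1 x2 y2 :: "'a::field"
  assumes "x1 \<noteq> 0" "y1 \<noteq> 0" "x2 \<noteq> 0" "y2 \<noteq> 0" "x1 + 1 \<noteq> 0" "x2 + 1 \<noteq> 0"
  shows "rho x1 y1 = rho x2 y2 \<longleftrightarrow> cross_eq x1 y1 x2 y2"
proof -
  have rho: "rho x y = x * (y + 1) / (y * (x + 1))" if "x \<noteq> 0" "y \<noteq> 0" "x + 1 \<noteq> 0" for x y :: 'a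
    unfolding rho_def using that by (simp add: field_simps)
  show ?thesis
    unfolding rho[OF assms(1,2,5)] rho[OF assms(3,4,6)] cross_eq_def
    using assms by (simp add: divide_eq_eq eq_divide_eq ac_simps)
qed

lemma cross_product_kernel:
  fixes x1 y1 x2 y2 :: "'a::field"
  defines "k0 \<equiv> x1 * x2 * (y1 + y2)" and "k1 \<equiv> x2 * (1 + y2)" and "k2 \<equiv> x1 * (1 + y1)"
  assumes char: "CHAR('a) = 2" and eq: "cross_eq x1 y1 x2 y2"
  shows "k0 + k1 * x1 + k2 * x2 = 0" and "k0 + k1 * y1 + k2 * y2 = 0"
    and "k0 + k1 * (x1 * y1) + k2 * (x2 * y2) = 0"
proof -
  \<comment> \<open>(k0, k1, k2) is the cross product of the rows (1, x1, x2) and (1, x1 y1, x2 y2);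
     it is orthogonal to (1, y1, y2) exactly because of the collision equation.\<close>
  have two: "(2::'a) = 0"
    using of_nat_CHAR[where 'a='a] char by simp
  have "k0 + k1 * x1 + k2 * x2 = 2 * (x1 * x2 * (1 + y1 + y2))"
    unfolding k0_def k1_def k2_def by (simp add: algebra_simps)
  then show "k0 + k1 * x1 + k2 * x2 = 0"
    using two by simp
  have "k0 + k1 * y1 + k2 * y2 = (x1 * (y1 + 1) * y2 * (x2 + 1) - x2 * (y2 + 1) * y1 * (x1 + 1))
          + 2 * (x1 * x2 * y1 + x2 * y1 + x2 * y1 * y2)"
    unfolding k0_def k1_def k2_def by (simp add: algebra_simps)
  then show "k0 + k1 * y1 + k2 * y2 = 0"
    using two eq unfolding cross_eq_def by simp
  have "k0 + k1 * (x1 * y1) + k2 * (x2 * y2) = 2 * (x1 * x2 * (y1 + y2 + y1 * y2))"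
    unfolding k0_def k1_def k2_def by (simp add: algebra_simps)
  then show "k0 + k1 * (x1 * y1) + k2 * (x2 * y2) = 0"
    using two by simp
qed

lemma cross_product_kernel_sum_nonzero:
  fixes x1 y1 x2 y2 :: "'a::field"
  assumes char: "CHAR('a) = 2"
    and "x1 \<noteq> 0" "y1 \<noteq> 1" "x2 \<noteq> 1" "x1 \<noteq> x2 \<or> y1 \<noteq> y2"
    and eq: "cross_eq x1 y1 x2 y2"
  shows "x1 * x2 * (y1 + y2) + x2 * (1 + y2) + x1 * (1 + y1) \<noteq> 0"
proof
  assume sum: "x1 * x2 * (y1 + y2) + x2 * (1 + y2) + x1 * (1 + y1) = 0"
  have two: "(2::'a) = 0"
    using of_nat_CHAR[where 'a='a] char by simp
  have plus_1: "1 + x \<noteq> 0" if "x \<noteq> 1" for x :: 'a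
    using that CHAR_2_add_eq_0_iff[OF char] by (simp add: add.commute)
  have "x2 * (1 + y2) * (1 + x1) - x1 * (1 + y1) * (1 + x2)
          = (x1 * x2 * (y1 + y2) + x2 * (1 + y2) + x1 * (1 + y1)) - 2 * (x1 * x2 * y1 + x1 + x1 * y1)"
    by (simp add: algebra_simps)
  then have A: "x2 * (1 + y2) * (1 + x1) = x1 * (1 + y1) * (1 + x2)"
    using sum two by simp
  have eq': "x1 * (1 + y1) * (1 + x2) * y2 = x2 * (1 + y2) * (1 + x1) * y1"
    using eq unfolding cross_eq_def by (simp add: algebra_simps)
  have "x1 * (1 + y1) * (1 + x2) * (y1 - y2)
          = x1 * (1 + y1) * (1 + x2) * y1 - x1 * (1 + y1) * (1 + x2) * y2"
    by (simp add: algebra_simps)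
  also have "\<dots> = x2 * (1 + y2) * (1 + x1) * y1 - x2 * (1 + y2) * (1 + x1) * y1"
    by (simp only: A eq')
  finally have "x1 * (1 + y1) * (1 + x2) * (y1 - y2) = 0"
    by simp
  moreover have "x1 * (1 + y1) * (1 + x2) \<noteq> 0"
    using assms(2) plus_1 assms(3,4) by simp
  ultimately have "y1 = y2"
    by simp
  then have "(1 + y1) * (x2 - x1) = 0"
    using A by (simp add: algebra_simps)
  then have "x1 = x2"
    using plus_1[OF assms(3)] by simp
  with \<open>y1 = y2\<close> assms(5) show False
    by simp
qed

lemma three_term_relation:
  fixes x1 y1 x2 y2 :: "'a::field"
  assumes char: "CHAR('a) = 2"
    and "x1 \<noteq> 0" "y1 \<noteq> 1" "x2 \<noteq> 1" "x1 \<noteq> x2 \<or> y1 \<noteq> y2"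
    and eq: "cross_eq x1 y1 x2 y2"
  obtains k0 k1 k2 where "k0 + k1 * x1 + k2 * x2 = 0" "k0 + k1 * y1 + k2 * y2 = 0"
    "k0 + k1 * (x1 * y1) + k2 * (x2 * y2) = 0" "k0 + k1 + k2 = 1"
proof -
  define k0 where "k0 = x1 * x2 * (y1 + y2)"
  define k1 where "k1 = x2 * (1 + y2)"
  define k2 where "k2 = x1 * (1 + y1)"
  define S where "S = k0 + k1 + k2"
  note kernel = cross_product_kernel[OF char eq, folded k0_def k1_def k2_def]
  have "S \<noteq> 0"
    using cross_product_kernel_sum_nonzero[OF assms] unfolding S_def k0_def k1_def k2_def .
  have scaled: "k0 / S + k1 / S * a + k2 / S * b = (k0 + k1 * a + k2 * b) / S" for a b
    by (simp add: add_divide_distrib)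
  show thesis
  proof (rule that[of "k0 / S" "k1 / S" "k2 / S"])
    show "k0 / S + k1 / S * x1 + k2 / S * x2 = 0"
      unfolding scaled kernel(1) by simp
    show "k0 / S + k1 / S * y1 + k2 / S * y2 = 0"
      unfolding scaled kernel(2) by simp
    show "k0 / S + k1 / S * (x1 * y1) + k2 / S * (x2 * y2) = 0"
      unfolding scaled kernel(3) by simp
    show "k0 / S + k1 / S + k2 / S = 1"
      using \<open>S \<noteq> 0\<close> unfolding S_def by (simp add: add_divide_distrib[symmetric])
  qed
qed

lemma num_monomials_three_terms:
  "num_monomials ([:k0:] + monom k1 a + monom k2 b) < 4"
proof -
  have "coeff [:k0:] i = (if i = 0 then k0 else 0)" for i
    by (cases i) simp_all
  then have "{i. coeff ([:k0:] + monom k1 a + monom k2 b) i \<noteq> 0} \<subseteq> {0, a, b}"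
    by (auto split: if_splits)
  then have "num_monomials ([:k0:] + monom k1 a + monom k2 b) \<le> card {0, a, b}"
    unfolding num_monomials_def by (intro card_mono) auto
  also have "\<dots> \<le> 3"
    by (simp add: card_insert_if)
  finally show ?thesis
    by simp
qed

text \<open>Collisions with exponents reduced to \<open>\<nat>\<close> and the equation for \<open>\<rho>\<close> cleared of
  denominators.\<close>

definition nat_collision :: "'a::field \<Rightarrow> nat \<Rightarrow> nat \<Rightarrow> nat \<Rightarrow> nat \<Rightarrow> nat \<Rightarrow> nat \<Rightarrow> bool" where
  "nat_collision z p1 a1 p2 a2 a b \<longleftrightarrow>
     \<not> p1 ^ a1 dvd a \<and> \<not> p2 ^ a2 dvd a \<and> \<not> p1 ^ a1 dvd b \<and> \<not> p2 ^ a2 dvd b \<and>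
     \<not> [a = b] (mod p1 ^ a1 * p2 ^ a2) \<and>
     (let s10 = canon_elem p1 a1 p2 a2 1 0; s01 = canon_elem p1 a1 p2 a2 0 1 in
       cross_eq (z ^ (s10 * a)) (z ^ (s01 * a)) (z ^ (s10 * b)) (z ^ (s01 * b)))"

lemma power_canon_elem_1_0_mult_0_1:
  assumes "coprime p1 p2" "p1 \<noteq> 0" "p2 \<noteq> 0" "primitive_root_of_unity z (p1 ^ a1 * p2 ^ a2)"
  shows "z ^ canon_elem p1 a1 p2 a2 1 0 * z ^ canon_elem p1 a1 p2 a2 0 1 = z"
  using canon_elem_1_0_add_0_1[OF assms(1-3)]
    primitive_root_of_unity_pow_eq_iff[OF assms(4), of "canon_elem p1 a1 p2 a2 1 0 + canon_elem p1 a1 p2 a2 0 1" 1]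
  by (simp add: power_add)

lemma goodI:
  assumes "coprime p1 p2" "p1 \<noteq> 0" "p2 \<noteq> 0" "1 < p1 ^ a1 * p2 ^ a2"
    and "poly P (z ^ canon_elem p1 a1 p2 a2 1 0) = 0" "poly P (z ^ canon_elem p1 a1 p2 a2 0 1) = 0"
    and "poly P z = 0" "poly P 1 = 1" "num_monomials P < 4"
  shows "good z p1 a1 p2 a2"
proof -
  have "canonical_set p1 a1 p2 a2 = {canon_elem p1 a1 p2 a2 0 1, canon_elem p1 a1 p2 a2 1 0, 1}"
    unfolding canonical_set_def by (simp only: canon_elem_1_1[OF assms(1-4)])
  then have "decoding_poly z (canonical_set p1 a1 p2 a2) P"
    unfolding decoding_poly_def using assms(5-8) by simp
  with assms(9) show ?thesis
    unfolding good_def by blast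
qed

lemma good_of_nat_collision:
  fixes z :: "'a::field"
  assumes char: "CHAR('a) = 2" and cop: "coprime p1 p2" "p1 \<noteq> 0" "p2 \<noteq> 0"
    and prim: "primitive_root_of_unity z (p1 ^ a1 * p2 ^ a2)"
    and col: "nat_collision z p1 a1 p2 a2 a b"
  shows "good z p1 a1 p2 a2"
proof -
  define u where "u = z ^ canon_elem p1 a1 p2 a2 1 0"
  define v where "v = z ^ canon_elem p1 a1 p2 a2 0 1"
  note pow10_eq_iff = power_canon_elem_1_0_eq_iff[OF cop prim]
  note pow01_eq_iff = power_canon_elem_0_1_eq_iff[OF cop prim]
  have not_dvd: "\<not> p1 ^ a1 dvd a" "\<not> p2 ^ a2 dvd a" "\<not> p1 ^ a1 dvd b" "\<not> p2 ^ a2 dvd b"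
    and not_cong: "\<not> [a = b] (mod p1 ^ a1 * p2 ^ a2)"
    and eq: "cross_eq (u ^ a) (v ^ a) (u ^ b) (v ^ b)"
    using col unfolding nat_collision_def Let_def u_def v_def by (simp_all add: power_mult)
  have ne_1: "v ^ a \<noteq> 1" "u ^ b \<noteq> 1"
    using not_dvd pow10_eq_iff[of _ 0] pow01_eq_iff[of _ 0]
    unfolding u_def v_def by (simp_all add: power_mult cong_0_iff)
  have "u ^ a \<noteq> u ^ b \<or> v ^ a \<noteq> v ^ b"
    using not_cong pow10_eq_iff pow01_eq_iff cong_mult_modulus_iff_nat[of "p1 ^ a1" "p2 ^ a2"] cop
    unfolding u_def v_def by (simp add: power_mult)
  moreover have "u ^ a \<noteq> 0"
    using primitive_root_of_unity_nonzero[OF prim] unfolding u_def by simp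
  ultimately obtain k0 k1 k2 where k:
    "k0 + k1 * u ^ a + k2 * u ^ b = 0" "k0 + k1 * v ^ a + k2 * v ^ b = 0"
    "k0 + k1 * (u ^ a * v ^ a) + k2 * (u ^ b * v ^ b) = 0" "k0 + k1 + k2 = 1"
    using three_term_relation[OF char _ ne_1 _ eq] by blast
  define P where "P = [:k0:] + monom k1 a + monom k2 b"
  have poly_P: "poly P w = k0 + k1 * w ^ a + k2 * w ^ b" for w
    unfolding P_def by (simp add: poly_monom)
  have "p1 ^ a1 \<noteq> 1" "p1 ^ a1 \<noteq> 0"
    using not_dvd(1) cop(2) by (metis one_dvd, simp)
  then have "1 < p1 ^ a1"
    by linarith
  moreover have "p1 ^ a1 \<le> p1 ^ a1 * p2 ^ a2"
    using cop(3) by simp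
  ultimately have "1 < p1 ^ a1 * p2 ^ a2"
    by linarith
  moreover have "u * v = z"
    unfolding u_def v_def by (rule power_canon_elem_1_0_mult_0_1[OF cop prim])
  then have "poly P u = 0" "poly P v = 0" "poly P z = 0" "poly P 1 = 1"
    using k by (simp_all add: poly_P flip: power_mult_distrib)
  moreover have "num_monomials P < 4"
    unfolding P_def by (rule num_monomials_three_terms)
  ultimately show ?thesis
    unfolding u_def v_def by (intro goodI[OF cop])
qed

definition collision_poly :: "nat \<Rightarrow> nat \<Rightarrow> nat \<Rightarrow> nat \<Rightarrow> bit poly" where
  "collision_poly a1 b1 a2 b2 =
     monom 1 a1 * (monom 1 b1 + 1) * monom 1 b2 * (monom 1 a2 + 1)
     + monom 1 a2 * (monom 1 b2 + 1) * monom 1 b1 * (monom 1 a1 + 1)"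

lemma poly_collision_poly_eq_0_iff:
  assumes "CHAR('a::field) = 2"
  shows "poly (of_bit_poly (collision_poly a1 b1 a2 b2)) (x::'a) = 0
           \<longleftrightarrow> cross_eq (x ^ a1) (x ^ b1) (x ^ a2) (x ^ b2)"
  unfolding collision_poly_def cross_eq_def
  by (simp only: of_bit_poly_add[OF assms] of_bit_poly_mult[OF assms] map_poly_monom of_bit_0 of_bit_1
      map_poly_1' poly_add poly_mult poly_monom poly_1 mult_1 CHAR_2_add_eq_0_iff[OF assms])

lemma nat_collision_transfer:
  fixes \<eta> :: "'a::field" and \<delta> :: "'b::field"
  assumes char: "CHAR('a) = 2" "CHAR('b) = 2"
    and prim: "primitive_root_of_unity \<eta> (p1 ^ a1 * p2 ^ a2)"
      "primitive_root_of_unity \<delta> (p1 ^ a1 * p2 ^ a2)"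
    and col: "nat_collision \<eta> p1 a1 p2 a2 a b"
  shows "\<exists>a' b'. nat_collision \<delta> p1 a1 p2 a2 a' b'"
proof -
  define s10 where "s10 = canon_elem p1 a1 p2 a2 1 0"
  define s01 where "s01 = canon_elem p1 a1 p2 a2 0 1"
  define G where "G = collision_poly (s10 * a) (s01 * a) (s10 * b) (s01 * b)"
  have not_dvd: "\<not> p1 ^ a1 dvd a" "\<not> p2 ^ a2 dvd a" "\<not> p1 ^ a1 dvd b" "\<not> p2 ^ a2 dvd b"
    and not_cong: "\<not> [a = b] (mod p1 ^ a1 * p2 ^ a2)"
    and eq: "cross_eq (\<eta> ^ (s10 * a)) (\<eta> ^ (s01 * a)) (\<eta> ^ (s10 * b)) (\<eta> ^ (s01 * b))"
    using col unfolding nat_collision_def Let_def s10_def s01_def by simp_all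
  have "poly (of_bit_poly G) \<eta> = 0"
    unfolding G_def poly_collision_poly_eq_0_iff[OF char(1)] by (rule eq)
  then obtain j where j: "coprime j (p1 ^ a1 * p2 ^ a2)" "poly (of_bit_poly G) (\<delta> ^ j) = 0"
    using primitive_root_of_unity_conjugate[OF char prim] by metis
  have "(\<delta> ^ j) ^ (s * n) = \<delta> ^ (s * (j * n))" for s n
    by (simp add: mult_ac flip: power_mult)
  then have "cross_eq (\<delta> ^ (s10 * (j * a))) (\<delta> ^ (s01 * (j * a))) (\<delta> ^ (s10 * (j * b))) (\<delta> ^ (s01 * (j * b)))"
    using j(2) unfolding G_def poly_collision_poly_eq_0_iff[OF char(2)] by simp
  moreover have "coprime (p1 ^ a1) j" "coprime (p2 ^ a2) j"
    using j(1) by (simp_all add: coprime_commute)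
  then have "\<not> p1 ^ a1 dvd j * a" "\<not> p2 ^ a2 dvd j * a" "\<not> p1 ^ a1 dvd j * b" "\<not> p2 ^ a2 dvd j * b"
    using not_dvd by (simp_all add: coprime_dvd_mult_right_iff)
  moreover have "\<not> [j * a = j * b] (mod p1 ^ a1 * p2 ^ a2)"
    using not_cong j(1) by (simp add: cong_mult_lcancel_nat)
  ultimately have "nat_collision \<delta> p1 a1 p2 a2 (j * a) (j * b)"
    unfolding nat_collision_def Let_def s10_def s01_def by blast
  then show ?thesis
    by blast
qed

lemma power_int_canon_elem_lower:
  fixes \<gamma> :: "'a::field"
  assumes cop: "coprime p1 p2" "p1 \<noteq> 0" "p2 \<noteq> 0" and le: "c1 \<le> b1" "c2 \<le> b2"
    and root: "(\<gamma> ^ d) ^ (p1 ^ c1 * p2 ^ c2) = 1"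
    and cong: "[int a = u0] (mod int (p1 ^ c1 * p2 ^ c2))"
  shows "\<gamma> powi (int (canon_elem p1 b1 p2 b2 e1 e2) * (int d * u0))
           = (\<gamma> ^ d) ^ (canon_elem p1 c1 p2 c2 e1 e2 * a)"
proof -
  define s' where "s' = canon_elem p1 b1 p2 b2 e1 e2"
  define s where "s = canon_elem p1 c1 p2 c2 e1 e2"
  have "[int s' = int s] (mod int (p1 ^ c1 * p2 ^ c2))"
    using canon_elem_cong_lower[OF cop le] unfolding s'_def s_def cong_int_iff .
  then have "[int s' * u0 = int (s * a)] (mod int (p1 ^ c1 * p2 ^ c2))"
    using cong_mult[OF _ cong_sym[OF cong]] by simp
  then have "(\<gamma> ^ d) powi (int s' * u0) = (\<gamma> ^ d) ^ (s * a)"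
    by (rule power_int_eq_power_of_cong[OF root])
  moreover have "\<gamma> powi (int s' * (int d * u0)) = (\<gamma> ^ d) powi (int s' * u0)"
    by (simp add: power_int_mult mult.left_commute flip: power_int_of_nat)
  ultimately show ?thesis
    unfolding s'_def s_def by simp
qed

lemma exponent_le_of_not_dvd:
  fixes u :: int
  assumes "\<not> int (p ^ b) dvd int d * u" "p ^ w dvd d"
  shows "w \<le> b"
proof (rule ccontr)
  assume "\<not> w \<le> b"
  then have "p ^ b dvd d"
    using assms(2) by (meson dvd_trans le_imp_power_dvd nat_le_linear)
  then show False
    using assms(1) by (meson dvd_mult2 of_nat_dvd_iff)
qed

lemma not_dvd_of_not_dvd_scaled:
  fixes n0 :: int
  assumes "\<not> int (q' * q) dvd int d * n0" "q' dvd d" "q dvd m" "[int n = n0] (mod int m)"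
  shows "\<not> q dvd n"
proof
  assume "q dvd n"
  then have "int q dvd n0"
    using assms(3,4) by (meson cong_dvd_iff cong_dvd_modulus of_nat_dvd_iff)
  then show False
    using assms(1,2) by (metis mult_dvd_mono of_nat_dvd_iff of_nat_mult)
qed

lemma not_cong_of_not_cong_scaled:
  fixes u0 v0 :: int
  assumes "\<not> [int d * u0 = int d * v0] (mod int (d * m))"
    and "[int a = u0] (mod int m)" "[int b = v0] (mod int m)"
  shows "\<not> [a = b] (mod m)"
proof
  assume "[a = b] (mod m)"
  then have "[u0 = v0] (mod int m)"
    using assms(2,3) by (metis cong_int_iff cong_sym cong_trans)
  then have "[int d * u0 = int d * v0] (mod int (d * m))"
    by (simp add: cong_iff_dvd_diff flip: right_diff_distrib)
  with assms(1) show False ..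
qed

lemma cross_eq_of_rho_eq:
  fixes \<eta> :: "'a::field" and p1 p2 c1 c2 :: nat
  defines "s10 \<equiv> canon_elem p1 c1 p2 c2 1 0" and "s01 \<equiv> canon_elem p1 c1 p2 c2 0 1"
  assumes char: "CHAR('a) = 2" and cop: "coprime p1 p2" "p1 \<noteq> 0" "p2 \<noteq> 0"
    and prim: "primitive_root_of_unity \<eta> (p1 ^ c1 * p2 ^ c2)"
    and not_dvd: "\<not> p1 ^ c1 dvd a" "\<not> p1 ^ c1 dvd b"
    and eq: "rho (\<eta> ^ (s10 * a)) (\<eta> ^ (s01 * a)) = rho (\<eta> ^ (s10 * b)) (\<eta> ^ (s01 * b))"
  shows "cross_eq (\<eta> ^ (s10 * a)) (\<eta> ^ (s01 * a)) (\<eta> ^ (s10 * b)) (\<eta> ^ (s01 * b))"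
proof -
  have "\<eta> ^ n \<noteq> 0" for n
    using primitive_root_of_unity_nonzero[OF prim] by simp
  moreover have "\<eta> ^ (s10 * n) + 1 \<noteq> 0" if "\<not> p1 ^ c1 dvd n" for n
    using that power_canon_elem_1_0_eq_iff[OF cop prim, of n 0] CHAR_2_add_eq_0_iff[OF char]
    unfolding s10_def by (simp add: cong_0_iff)
  ultimately show ?thesis
    using rho_eq_iff_cross_eq not_dvd eq by blast
qed

lemma nat_collision_of_collision:
  fixes \<gamma> :: "'a::field" and u0 v0 :: int
  assumes char: "CHAR('a) = 2" and cop: "coprime p1 p2" "p1 \<noteq> 0" "p2 \<noteq> 0"
    and prim: "primitive_root_of_unity \<gamma> (p1 ^ b1 * p2 ^ b2)"
    and d: "d = p1 ^ w1 * p2 ^ w2"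
    and col: "collision \<gamma> p1 b1 p2 b2 (int d * u0) (int d * v0)"
  shows "primitive_root_of_unity (\<gamma> ^ d) (p1 ^ (b1 - w1) * p2 ^ (b2 - w2))"
    and "\<exists>a b. nat_collision (\<gamma> ^ d) p1 (b1 - w1) p2 (b2 - w2) a b"
proof -
  define c1 where "c1 = b1 - w1"
  define c2 where "c2 = b2 - w2"
  define m1 where "m1 = p1 ^ c1 * p2 ^ c2"
  have E: "\<not> int (p1 ^ b1) dvd int d * u0" "\<not> int (p2 ^ b2) dvd int d * u0"
      "\<not> int (p1 ^ b1) dvd int d * v0" "\<not> int (p2 ^ b2) dvd int d * v0"
    and rho_eq: "let s10 = int (canon_elem p1 b1 p2 b2 1 0); s01 = int (canon_elem p1 b1 p2 b2 0 1) in
        rho (\<gamma> powi (s10 * (int d * u0))) (\<gamma> powi (s01 * (int d * u0)))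
        = rho (\<gamma> powi (s10 * (int d * v0))) (\<gamma> powi (s01 * (int d * v0)))"
    and not_cong: "\<not> [int d * u0 = int d * v0] (mod int (p1 ^ b1 * p2 ^ b2))"
    using col unfolding collision_def E_set_def by simp_all
  have "w1 \<le> b1" "w2 \<le> b2"
    using exponent_le_of_not_dvd[OF E(1)] exponent_le_of_not_dvd[OF E(2)] unfolding d by simp_all
  then have p1_split: "p1 ^ b1 = p1 ^ w1 * p1 ^ c1" and p2_split: "p2 ^ b2 = p2 ^ w2 * p2 ^ c2"
    unfolding c1_def c2_def by (simp_all flip: power_add)
  then have m2: "p1 ^ b1 * p2 ^ b2 = d * m1"
    unfolding d m1_def by (simp add: mult_ac)
  show prim_m1: "primitive_root_of_unity (\<gamma> ^ d) (p1 ^ (b1 - w1) * p2 ^ (b2 - w2))"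
    using primitive_root_of_unity_power prim unfolding m2 m1_def c1_def c2_def by blast
  define a where "a = nat (u0 mod int m1)"
  define b where "b = nat (v0 mod int m1)"
  have "0 < m1"
    unfolding m1_def using cop by simp
  then have a: "[int a = u0] (mod int m1)" and b: "[int b = v0] (mod int m1)"
    unfolding a_def b_def by (simp_all add: cong_def)
  have "(\<gamma> ^ d) ^ m1 = 1" "c1 \<le> b1" "c2 \<le> b2"
    using prim_m1 by (simp_all add: primitive_root_of_unity_pow_eq_1_iff m1_def c1_def c2_def)
  note lower = power_int_canon_elem_lower[OF cop this(2,3) this(1)[unfolded m1_def], folded m1_def]
  have "\<not> p1 ^ c1 dvd a" "\<not> p2 ^ c2 dvd a" "\<not> p1 ^ c1 dvd b" "\<not> p2 ^ c2 dvd b"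
    using not_dvd_of_not_dvd_scaled[OF E(1)[unfolded p1_split] _ _ a]
      not_dvd_of_not_dvd_scaled[OF E(2)[unfolded p2_split] _ _ a]
      not_dvd_of_not_dvd_scaled[OF E(3)[unfolded p1_split] _ _ b]
      not_dvd_of_not_dvd_scaled[OF E(4)[unfolded p2_split] _ _ b]
    unfolding d m1_def by simp_all
  moreover have "\<not> [a = b] (mod m1)"
    using not_cong_of_not_cong_scaled[OF not_cong[unfolded m2] a b] .
  moreover have "rho ((\<gamma> ^ d) ^ (canon_elem p1 c1 p2 c2 1 0 * a)) ((\<gamma> ^ d) ^ (canon_elem p1 c1 p2 c2 0 1 * a))
      = rho ((\<gamma> ^ d) ^ (canon_elem p1 c1 p2 c2 1 0 * b)) ((\<gamma> ^ d) ^ (canon_elem p1 c1 p2 c2 0 1 * b))"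
    using rho_eq unfolding Let_def lower[OF a] lower[OF b] .
  ultimately show "\<exists>a b. nat_collision (\<gamma> ^ d) p1 (b1 - w1) p2 (b2 - w2) a b"
    using cross_eq_of_rho_eq[OF char cop prim_m1[folded c1_def c2_def]]
    unfolding nat_collision_def Let_def m1_def c1_def c2_def by blast
qed

lemma int_prime_powers_mult_split:
  assumes "w1 \<le> i1" "w2 \<le> i2"
  shows "int (p1 ^ i1 * p2 ^ i2) * \<sigma>
           = int (p1 ^ w1 * p2 ^ w2) * (int (p1 ^ (i1 - w1) * p2 ^ (i2 - w2)) * \<sigma>)"
  using assms by (simp add: mult_ac flip: power_add)

theorem theorem4:
  fixes \<gamma> :: "'a::{field,finite}" and \<delta> :: "'b::{field,finite}"
    and p1 p2 b1 b2 i1 i2 j1 j2 :: nat and \<sigma>1 \<sigma>2 :: int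
  assumes "prime p1" "prime p2" "p1 > 2" "p2 > 2" "p1 \<noteq> p2"
    and "b1 \<ge> 1" "b2 \<ge> 1"
    and "CARD('a) = 2 ^ ord (p1 ^ b1 * p2 ^ b2) 2"
    and "primitive_root_of_unity \<gamma> (p1 ^ b1 * p2 ^ b2)"
    and "good \<gamma> p1 b1 p2 b2"
    and "coprime \<sigma>1 (int (p1 ^ b1 * p2 ^ b2))" "coprime \<sigma>2 (int (p1 ^ b1 * p2 ^ b2))"
    and "collision \<gamma> p1 b1 p2 b2 (int (p1 ^ i1 * p2 ^ i2) * \<sigma>1) (int (p1 ^ j1 * p2 ^ j2) * \<sigma>2)"
    and "CARD('b) = 2 ^ ord (p1 ^ (b1 - min i1 j1) * p2 ^ (b2 - min i2 j2)) 2"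
    and "primitive_root_of_unity \<delta> (p1 ^ (b1 - min i1 j1) * p2 ^ (b2 - min i2 j2))"
  shows "good \<delta> p1 (b1 - min i1 j1) p2 (b2 - min i2 j2)"
proof -
  have char: "CHAR('a) = 2" "CHAR('b) = 2"
    using CHAR_eq_2_of_card assms(8,14) by blast+
  have cop: "coprime p1 p2" "p1 \<noteq> 0" "p2 \<noteq> 0"
    using assms(1,2,5) primes_coprime by auto
  define d where "d = p1 ^ min i1 j1 * p2 ^ min i2 j2"
  have "collision \<gamma> p1 b1 p2 b2 (int d * (int (p1 ^ (i1 - min i1 j1) * p2 ^ (i2 - min i2 j2)) * \<sigma>1))
          (int d * (int (p1 ^ (j1 - min i1 j1) * p2 ^ (j2 - min i2 j2)) * \<sigma>2))"
    using assms(13) unfolding d_def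
      int_prime_powers_mult_split[of "min i1 j1" i1 "min i2 j2" i2, OF min.cobounded1 min.cobounded1]
      int_prime_powers_mult_split[of "min i1 j1" j1 "min i2 j2" j2, OF min.cobounded2 min.cobounded2] .
  from nat_collision_of_collision[OF char(1) cop assms(9) d_def this]
  obtain a b where "primitive_root_of_unity (\<gamma> ^ d) (p1 ^ (b1 - min i1 j1) * p2 ^ (b2 - min i2 j2))"
    "nat_collision (\<gamma> ^ d) p1 (b1 - min i1 j1) p2 (b2 - min i2 j2) a b"
    by blast
  with nat_collision_transfer[OF char this(1) assms(15)]
  obtain a' b' where "nat_collision \<delta> p1 (b1 - min i1 j1) p2 (b2 - min i2 j2) a' b'"
    by blast
  then show ?thesis
    by (rule good_of_nat_collision[OF char(2) cop assms(15)])
qed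

end
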